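(* For every $n\ge1$, $\mathcal{S}_n(0021,0121)=\mathcal{S}_n(0121,0132)=\mathcal{S}_n(021)$, and for $0\le m<n$, $S_{n,m}(0021,0121)=S_{n,m}(0121,0132)=N_{n,m+1}$.
   Context: An ascent in a sequence $x_1\cdots x_k$ is an index $j$ with $x_j<x_{j+1}$; $\mathrm{asc}$ denotes the number of ascents. An ascent sequence of length $n$ is a sequence $x_1\cdots x_n$ of non-negative integers with $x_1=0$ and $x_i\le \mathrm{asc}(x_1\cdots x_{i-1})+1$ for $1<i\le n$. A sequence $\pi$ contains a pattern $\tau=\tau_1\cdots\tau_k$ (a sequence of non-negative integers) if some subsequence of $\pi$ of length $k$ is order-isomorphic to $\tau$ (same relative order, equal letters to equal letters); otherwise it avoids $\tau$. $\mathcal{S}_n(T)$ is the set of ascent sequences of length $n$ avoiding all patterns in $T$; $\mathcal{S}_{n,m}(T)$ the subset with exactly $m$ ascents, $S_{n,m}(T)=|\mathcal{S}_{n,m}(T)|$. $N_{n,m}=\frac1n\binom nm\binom n{m-1}$ is the Narayana number. *)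

theory Defs
  imports Complex_Main "HOL-Library.Sublist"
begin

definition asc :: "nat list \<Rightarrow> nat" where
  "asc xs = card {j. Suc j < length xs \<and> xs ! j < xs ! Suc j}"

definition ascent_seq :: "nat list \<Rightarrow> bool" where
  "ascent_seq xs \<longleftrightarrow> xs \<noteq> [] \<and> xs ! 0 = 0 \<and>
     (\<forall>i. 0 < i \<and> i < length xs \<longrightarrow> xs ! i \<le> asc (take i xs) + 1)"

definition order_iso :: "nat list \<Rightarrow> nat list \<Rightarrow> bool" where
  "order_iso a b \<longleftrightarrow> length a = length b \<and>
     (\<forall>i<length a. \<forall>j<length a. (a ! i < a ! j \<longleftrightarrow> b ! i < b ! j) \<and> (a ! i = a ! j \<longleftrightarrow> b ! i = b ! j))"

definition contains :: "nat list \<Rightarrow> nat list \<Rightarrow> bool" where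
  "contains \<pi> \<tau> \<longleftrightarrow> (\<exists>s. subseq s \<pi> \<and> order_iso s \<tau>)"

definition avoids :: "nat list \<Rightarrow> nat list \<Rightarrow> bool" where
  "avoids \<pi> \<tau> \<longleftrightarrow> \<not> contains \<pi> \<tau>"

definition Sn :: "nat \<Rightarrow> nat list set \<Rightarrow> nat list set" where
  "Sn n T = {xs. ascent_seq xs \<and> length xs = n \<and> (\<forall>\<tau>\<in>T. avoids xs \<tau>)}"

definition Snm_set :: "nat \<Rightarrow> nat \<Rightarrow> nat list set \<Rightarrow> nat list set" where
  "Snm_set n m T = {xs \<in> Sn n T. asc xs = m}"

definition Snm :: "nat \<Rightarrow> nat \<Rightarrow> nat list set \<Rightarrow> nat" where
  "Snm n m T = card (Snm_set n m T)"

definition narayana :: "nat \<Rightarrow> nat \<Rightarrow> real" where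
  "narayana n m = (1 / real n) * real (n choose m) * real (n choose (m - 1))"

end

theory Submission
  imports Defs
begin

text \<open>An ascent sequence avoids 021 iff its nonzero letters weakly increase. Each of 0021, 0121,
  0132 contains 021, and conversely an occurrence of 021 in an ascent sequence forces 0121, or both
  0021 and 0132. So all three classes coincide.

  To count 021-avoiders by ascents, record their ascent tops (the right letters of the ascents).
  They form a Catalan word \<open>w\<close> (weakly increasing, \<open>i\<close>-th letter between 1 and \<open>i\<close>), and building
  the sequences letter by letter shows that exactly \<open>C(n + asc w, 2 |w|)\<close> avoiders of length \<open>n\<close>
  have ascent tops \<open>w\<close>. Catalan words of length \<open>m\<close> with \<open>s\<close> ascents are counted by
  \<open>C(m,s) C(m,s+1) / m\<close>, and a Vandermonde computation turns the resulting sum into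
  \<open>N(n, m+1)\<close>.\<close>

lemma subseq_imp_nth_indices:
  assumes "subseq s xs"
  obtains idx where "length idx = length s" "sorted_wrt (<) idx" "\<forall>i\<in>set idx. i < length xs"
    "s = map ((!) xs) idx"
proof -
  have "\<exists>idx. length idx = length s \<and> sorted_wrt (<) idx \<and> (\<forall>i\<in>set idx. i < length xs)
          \<and> s = map ((!) xs) idx"
    using assms
  proof (induction rule: list_emb.induct)
    case (list_emb_Nil ys)
    show ?case by (intro exI[of _ "[]"]) auto
  next
    case (list_emb_Cons xs ys y)
    then obtain idx where "length idx = length xs" "sorted_wrt (<) idx"
        "\<forall>i\<in>set idx. i < length ys" "xs = map ((!) ys) idx"
      by blast
    then show ?case by (intro exI[of _ "map Suc idx"]) (auto simp: sorted_wrt_map)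
  next
    case (list_emb_Cons2 x y xs ys)
    then obtain idx where "length idx = length xs" "sorted_wrt (<) idx"
        "\<forall>i\<in>set idx. i < length ys" "xs = map ((!) ys) idx"
      by blast
    then show ?case
      using list_emb_Cons2.hyps by (intro exI[of _ "0 # map Suc idx"]) (auto simp: sorted_wrt_map)
  qed
  then show thesis using that by blast
qed

lemma subseq_map_nth:
  assumes "sorted_wrt (<) idx" "\<forall>i\<in>set idx. i < length xs"
  shows "subseq (map ((!) xs) idx) xs"
  using assms
proof (induction idx arbitrary: xs rule: rev_induct)
  case Nil
  then show ?case by simp
next
  case (snoc i idx)
  have below: "\<forall>j\<in>set idx. j < i" and i: "i < length xs"
    using snoc.prems by (auto simp: sorted_wrt_append)
  have "subseq (map ((!) (take i xs)) idx) (take i xs)"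
    using snoc.prems below i by (intro snoc.IH) (auto simp: sorted_wrt_append)
  moreover have "map ((!) (take i xs)) idx = map ((!) xs) idx"
    using below by simp
  moreover have "subseq [xs ! i] (drop i xs)"
    using i by (simp add: Cons_nth_drop_Suc[symmetric])
  ultimately have "subseq (map ((!) xs) idx @ [xs ! i]) (take i xs @ drop i xs)"
    by (metis list_emb_append_mono)
  then show ?case by simp
qed

lemma contains_iff_nth_indices:
  "contains xs \<tau> \<longleftrightarrow> (\<exists>idx. length idx = length \<tau> \<and> sorted_wrt (<) idx \<and>
     (\<forall>i\<in>set idx. i < length xs) \<and> order_iso (map ((!) xs) idx) \<tau>)"
proof
  assume "contains xs \<tau>"
  then obtain s where s: "subseq s xs" "order_iso s \<tau>" unfolding contains_def by blast
  obtain idx where "length idx = length s" "sorted_wrt (<) idx" "\<forall>i\<in>set idx. i < length xs"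
    "s = map ((!) xs) idx"
    using subseq_imp_nth_indices[OF s(1)] by blast
  then show "\<exists>idx. length idx = length \<tau> \<and> sorted_wrt (<) idx \<and>
      (\<forall>i\<in>set idx. i < length xs) \<and> order_iso (map ((!) xs) idx) \<tau>"
    using s(2) unfolding order_iso_def by auto
next
  assume "\<exists>idx. length idx = length \<tau> \<and> sorted_wrt (<) idx \<and>
      (\<forall>i\<in>set idx. i < length xs) \<and> order_iso (map ((!) xs) idx) \<tau>"
  then show "contains xs \<tau>" unfolding contains_def using subseq_map_nth by blast
qed

lemma contains_length3_iff:
  "contains xs [a, b, c] \<longleftrightarrow>
     (\<exists>i j k. i < j \<and> j < k \<and> k < length xs \<and> order_iso [xs!i, xs!j, xs!k] [a, b, c])"
  unfolding contains_iff_nth_indices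
proof safe
  fix idx :: "nat list"
  assume idx: "length idx = length [a, b, c]" "sorted_wrt (<) idx" "\<forall>i\<in>set idx. i < length xs"
    "order_iso (map ((!) xs) idx) [a, b, c]"
  then obtain i j k where "idx = [i, j, k]" by (auto simp: length_Suc_conv)
  with idx show "\<exists>i j k. i < j \<and> j < k \<and> k < length xs \<and> order_iso [xs!i, xs!j, xs!k] [a, b, c]"
    by auto
next
  fix i j k
  assume "i < j" "j < k" "k < length xs" "order_iso [xs!i, xs!j, xs!k] [a, b, c]"
  then show "\<exists>idx. length idx = length [a, b, c] \<and> sorted_wrt (<) idx \<and>
      (\<forall>i\<in>set idx. i < length xs) \<and> order_iso (map ((!) xs) idx) [a, b, c]"
    by (intro exI[of _ "[i, j, k]"]) auto
qed

lemma contains_length4_iff: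
  "contains xs [a, b, c, d] \<longleftrightarrow> (\<exists>i j k l. i < j \<and> j < k \<and> k < l \<and> l < length xs \<and>
     order_iso [xs!i, xs!j, xs!k, xs!l] [a, b, c, d])"
  unfolding contains_iff_nth_indices
proof safe
  fix idx :: "nat list"
  assume idx: "length idx = length [a, b, c, d]" "sorted_wrt (<) idx" "\<forall>i\<in>set idx. i < length xs"
    "order_iso (map ((!) xs) idx) [a, b, c, d]"
  then obtain i j k l where "idx = [i, j, k, l]" by (auto simp: length_Suc_conv)
  with idx show "\<exists>i j k l. i < j \<and> j < k \<and> k < l \<and> l < length xs \<and>
      order_iso [xs!i, xs!j, xs!k, xs!l] [a, b, c, d]"
    by auto
next
  fix i j k l
  assume "i < j" "j < k" "k < l" "l < length xs" "order_iso [xs!i, xs!j, xs!k, xs!l] [a, b, c, d]"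
  then show "\<exists>idx. length idx = length [a, b, c, d] \<and> sorted_wrt (<) idx \<and>
      (\<forall>i\<in>set idx. i < length xs) \<and> order_iso (map ((!) xs) idx) [a, b, c, d]"
    by (intro exI[of _ "[i, j, k, l]"]) auto
qed

lemma order_iso_021_iff: "order_iso [x, y, z] [0, 2, 1] \<longleftrightarrow> x < z \<and> z < y"
  unfolding order_iso_def by (simp add: All_less_Suc numeral_eq_Suc; arith)

lemma order_iso_0021_iff: "order_iso [x, y, z, w] [0, 0, 2, 1] \<longleftrightarrow> x = y \<and> y < w \<and> w < z"
  unfolding order_iso_def by (simp add: All_less_Suc numeral_eq_Suc; arith)

lemma order_iso_0121_iff: "order_iso [x, y, z, w] [0, 1, 2, 1] \<longleftrightarrow> x < y \<and> y = w \<and> w < z"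
  unfolding order_iso_def by (simp add: All_less_Suc numeral_eq_Suc; arith)

lemma order_iso_0132_iff: "order_iso [x, y, z, w] [0, 1, 3, 2] \<longleftrightarrow> x < y \<and> y < w \<and> w < z"
  unfolding order_iso_def by (simp add: All_less_Suc numeral_eq_Suc; arith)

definition nonzeros_sorted :: "nat list \<Rightarrow> bool" where
  "nonzeros_sorted xs \<longleftrightarrow>
     (\<forall>i j. i < j \<and> j < length xs \<and> 0 < xs!i \<and> 0 < xs!j \<longrightarrow> xs!i \<le> xs!j)"

lemma asc_le_length: "asc xs \<le> length xs - 1"
proof -
  have "{j. Suc j < length xs \<and> xs ! j < xs ! Suc j} \<subseteq> {..<length xs - 1}" by auto
  then show ?thesis unfolding asc_def by (metis card_lessThan card_mono finite_lessThan)
qed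

lemma asc_pos_obtain_ascent:
  assumes "0 < asc xs"
  obtains p where "Suc p < length xs" "xs ! p < xs ! Suc p"
  using assms unfolding asc_def by (metis (mono_tags, lifting) card.empty empty_Collect_eq less_irrefl)

lemma contains_021_iff_not_nonzeros_sorted:
  assumes "xs ! 0 = 0"
  shows "contains xs [0,2,1] \<longleftrightarrow> \<not> nonzeros_sorted xs"
proof
  assume "contains xs [0,2,1]"
  then obtain i j k where "i < j" "j < k" "k < length xs" "xs!i < xs!k" "xs!k < xs!j"
    unfolding contains_length3_iff order_iso_021_iff by blast
  then show "\<not> nonzeros_sorted xs" unfolding nonzeros_sorted_def
    by (metis gr_zeroI leD not_less0 order.strict_trans)
next
  assume "\<not> nonzeros_sorted xs"
  then obtain i j where h: "i < j" "j < length xs" "0 < xs!i" "0 < xs!j" "xs!j < xs!i"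
    unfolding nonzeros_sorted_def by (meson not_le)
  have "0 < i" using h assms by (metis gr0I less_irrefl)
  then show "contains xs [0,2,1]" unfolding contains_length3_iff order_iso_021_iff
    using h assms by (intro exI[of _ 0] exI[of _ i] exI[of _ j]) auto
qed

lemma nth_repeat_if_bounded:
  assumes "\<forall>q<j. xs ! q < a" "a < j"
  obtains p q where "p < q" "q < j" "xs ! p = xs ! q"
proof -
  have "\<not> inj_on ((!) xs) {..<j}"
  proof
    assume inj: "inj_on ((!) xs) {..<j}"
    have "(!) xs ` {..<j} \<subseteq> {..<a}" using assms(1) by auto
    then have "card ((!) xs ` {..<j}) \<le> a" by (metis card_lessThan card_mono finite_lessThan)
    then show False using card_image[OF inj] assms(2) by simp
  qed
  then show thesis
    using that unfolding inj_on_def by (metis lessThan_iff linorder_neqE_nat)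
qed

lemma contains_0021_imp_021: "contains xs [0,0,2,1] \<Longrightarrow> contains xs [0,2,1]"
  unfolding contains_length3_iff contains_length4_iff order_iso_021_iff order_iso_0021_iff
  by (metis order.strict_trans)

lemma contains_0121_imp_021: "contains xs [0,1,2,1] \<Longrightarrow> contains xs [0,2,1]"
  unfolding contains_length3_iff contains_length4_iff order_iso_021_iff order_iso_0121_iff
  by (metis order.strict_trans)

lemma contains_0132_imp_021: "contains xs [0,1,3,2] \<Longrightarrow> contains xs [0,2,1]"
  unfolding contains_length3_iff contains_length4_iff order_iso_021_iff order_iso_0132_iff
  by (metis order.strict_trans)

text \<open>Let \<open>a\<close> be the last letter of an occurrence of 021 and \<open>j0\<close> the first position carrying a
  letter larger than \<open>a\<close>. The ascent condition at \<open>j0\<close> needs at least \<open>a\<close> ascents before \<open>j0\<close>.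
  Either \<open>a\<close> occurs before \<open>j0\<close> (an occurrence of 0121), or all letters before \<open>j0\<close> are
  below \<open>a < j0\<close>, so two of them coincide (0021) and one of the ascents gives 0132.\<close>

lemma ascent_seq_contains_021_cases:
  assumes "ascent_seq xs" "contains xs [0,2,1]"
  shows "contains xs [0,1,2,1] \<or> contains xs [0,0,2,1] \<and> contains xs [0,1,3,2]"
proof -
  obtain i j k where h: "i < j" "j < k" "k < length xs" "xs!i < xs!k" "xs!k < xs!j"
    using assms(2) unfolding contains_length3_iff order_iso_021_iff by blast
  define a where "a = xs ! k"
  have x0: "xs ! 0 = 0" using assms(1) unfolding ascent_seq_def by blast
  have a_pos: "0 < a" using h a_def by simp
  define j0 where "j0 = (LEAST j. a < xs ! j)"
  have j0: "a < xs ! j0" "j0 < k"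
    using LeastI[of "\<lambda>j. a < xs ! j" j] Least_le[of "\<lambda>j. a < xs ! j" j] h
    unfolding j0_def a_def by auto
  have below: "xs ! q \<le> a" if "q < j0" for q
    using not_less_Least[OF that[unfolded j0_def]] by simp
  have j0_pos: "0 < j0" using j0 x0 by (metis gr0I not_less0)
  have "xs ! j0 \<le> asc (take j0 xs) + 1"
    using assms(1) j0 h j0_pos unfolding ascent_seq_def by auto
  then have asc_ge: "a \<le> asc (take j0 xs)" using j0 by linarith
  also have "\<dots> \<le> j0 - 1" using asc_le_length[of "take j0 xs"] by simp
  finally have a_less: "a < j0" using j0_pos by linarith
  show ?thesis
  proof (cases "\<exists>q. 0 < q \<and> q < j0 \<and> xs ! q = a")
    case True
    then obtain q where "0 < q" "q < j0" "xs ! q = a" by blast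
    then have "contains xs [0,1,2,1]" unfolding contains_length4_iff order_iso_0121_iff
      using j0 h x0 a_pos a_def by (intro exI[of _ 0] exI[of _ q] exI[of _ j0] exI[of _ k]) auto
    then show ?thesis by blast
  next
    case False
    have lt: "xs ! q < a" if "q < j0" for q
      using False below[OF that] that x0 a_pos by (cases "q = 0") (auto simp: le_less)
    obtain p q where pq: "p < q" "q < j0" "xs ! p = xs ! q"
      using nth_repeat_if_bounded[OF _ a_less] lt by blast
    have "contains xs [0,0,2,1]" unfolding contains_length4_iff order_iso_0021_iff
      using pq j0 h lt a_def by (intro exI[of _ p] exI[of _ q] exI[of _ j0] exI[of _ k]) auto
    moreover obtain p where "Suc p < length (take j0 xs)" "take j0 xs ! p < take j0 xs ! Suc p"
      using asc_pos_obtain_ascent[of "take j0 xs"] asc_ge a_pos by auto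
    then have "contains xs [0,1,3,2]" unfolding contains_length4_iff order_iso_0132_iff
      using lt j0 h a_def by (intro exI[of _ p] exI[of _ "Suc p"] exI[of _ j0] exI[of _ k]) auto
    ultimately show ?thesis by blast
  qed
qed

definition nzsorted_ascent_seqs :: "nat \<Rightarrow> nat list set" where
  "nzsorted_ascent_seqs n = {xs. ascent_seq xs \<and> length xs = n \<and> nonzeros_sorted xs}"

lemma Sn_021_eq: "Sn n {[0,2,1]} = nzsorted_ascent_seqs n"
  unfolding Sn_def nzsorted_ascent_seqs_def avoids_def ascent_seq_def
  using contains_021_iff_not_nonzeros_sorted by auto

lemma Sn_0021_0121_eq_Sn_021: "Sn n {[0,0,2,1], [0,1,2,1]} = Sn n {[0,2,1]}"
  unfolding Sn_def avoids_def
  using ascent_seq_contains_021_cases contains_0021_imp_021 contains_0121_imp_021 by blast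

lemma Sn_0121_0132_eq_Sn_021: "Sn n {[0,1,2,1], [0,1,3,2]} = Sn n {[0,2,1]}"
  unfolding Sn_def avoids_def
  using ascent_seq_contains_021_cases contains_0132_imp_021 contains_0121_imp_021 by blast

definition ascent_tops :: "nat list \<Rightarrow> nat list" where
  "ascent_tops xs = map (\<lambda>j. xs ! Suc j) (filter (\<lambda>j. xs ! j < xs ! Suc j) [0..<length xs - 1])"

lemma ascent_tops_single [simp]: "ascent_tops [a] = []"
  unfolding ascent_tops_def by simp

lemma ascent_tops_snoc:
  assumes "xs \<noteq> []"
  shows "ascent_tops (xs @ [x]) = ascent_tops xs @ (if last xs < x then [x] else [])"
proof -
  obtain k where k: "length xs = Suc k" using assms by (cases xs) auto
  have "filter (\<lambda>j. (xs @ [x]) ! j < (xs @ [x]) ! Suc j) [0..<k] = filter (\<lambda>j. xs ! j < xs ! Suc j) [0..<k]"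
    using k by (intro filter_cong) (auto simp: nth_append)
  moreover have "map (\<lambda>j. (xs @ [x]) ! Suc j) (filter (\<lambda>j. xs ! j < xs ! Suc j) [0..<k])
      = map (\<lambda>j. xs ! Suc j) (filter (\<lambda>j. xs ! j < xs ! Suc j) [0..<k])"
    using k by (intro map_cong) (auto simp: nth_append)
  moreover have "(xs @ [x]) ! k = last xs" "(xs @ [x]) ! Suc k = x"
    using assms k by (auto simp: nth_append last_conv_nth)
  ultimately show ?thesis unfolding ascent_tops_def using k by simp
qed

lemma asc_eq_length_ascent_tops: "asc xs = length (ascent_tops xs)"
proof -
  have "{j. Suc j < length xs \<and> xs ! j < xs ! Suc j}
      = set (filter (\<lambda>j. xs ! j < xs ! Suc j) [0..<length xs - 1])"
    by auto
  then show ?thesis unfolding asc_def ascent_tops_def length_map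
    by (metis distinct_card distinct_filter distinct_upt)
qed

lemma asc_snoc:
  assumes "xs \<noteq> []"
  shows "asc (xs @ [x]) = asc xs + (if last xs < x then 1 else 0)"
  using ascent_tops_snoc[OF assms] by (simp add: asc_eq_length_ascent_tops)

lemma ascent_seq_snoc:
  assumes "xs \<noteq> []"
  shows "ascent_seq (xs @ [x]) \<longleftrightarrow> ascent_seq xs \<and> x \<le> asc xs + 1"
proof -
  have "(\<forall>i. 0 < i \<and> i < length (xs @ [x]) \<longrightarrow> (xs @ [x]) ! i \<le> asc (take i (xs @ [x])) + 1)
     \<longleftrightarrow> (\<forall>i. 0 < i \<and> i < length xs \<longrightarrow> xs ! i \<le> asc (take i xs) + 1) \<and> x \<le> asc xs + 1"
    using assms by (auto simp: nth_append less_Suc_eq)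
  then show ?thesis using assms unfolding ascent_seq_def by (auto simp: nth_append)
qed

lemma nonzeros_sorted_snoc:
  "nonzeros_sorted (xs @ [x]) \<longleftrightarrow>
     nonzeros_sorted xs \<and> (0 < x \<longrightarrow> (\<forall>y\<in>set xs. 0 < y \<longrightarrow> y \<le> x))"
  (is "?L \<longleftrightarrow> ?R")
proof
  assume L: ?L
  have "xs ! i \<le> xs ! j" if "i < j" "j < length xs" "0 < xs ! i" "0 < xs ! j" for i j
    using L[unfolded nonzeros_sorted_def, rule_format, of i j] that by (simp add: nth_append)
  moreover have "y \<le> x" if "0 < x" and y: "y \<in> set xs" and "0 < y" for y
  proof -
    obtain i where "i < length xs" "xs ! i = y" using y by (auto simp: in_set_conv_nth)
    then show ?thesis
      using L[unfolded nonzeros_sorted_def, rule_format, of i "length xs"] that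
      by (simp add: nth_append)
  qed
  ultimately show ?R unfolding nonzeros_sorted_def by blast
next
  assume ?R
  then show ?L unfolding nonzeros_sorted_def by (auto simp: nth_append less_Suc_eq)
qed

lemma nzsorted_ascent_seqs_snoc:
  assumes "xs \<noteq> []"
  shows "xs @ [x] \<in> nzsorted_ascent_seqs (Suc n) \<longleftrightarrow>
    xs \<in> nzsorted_ascent_seqs n \<and> x \<le> asc xs + 1 \<and> (0 < x \<longrightarrow> (\<forall>y\<in>set xs. 0 < y \<longrightarrow> y \<le> x))"
  unfolding nzsorted_ascent_seqs_def using ascent_seq_snoc[OF assms] nonzeros_sorted_snoc by auto

lemma nzsorted_ascent_seqs_1: "nzsorted_ascent_seqs (Suc 0) = {[0]}"
  unfolding nzsorted_ascent_seqs_def ascent_seq_def nonzeros_sorted_def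
  by (auto simp: length_Suc_conv)

lemma nzsorted_ascent_seqs_nonempty: "xs \<in> nzsorted_ascent_seqs n \<Longrightarrow> xs \<noteq> []"
  unfolding nzsorted_ascent_seqs_def ascent_seq_def by auto

definition catalan_word :: "nat list \<Rightarrow> bool" where
  "catalan_word w \<longleftrightarrow> sorted w \<and> (\<forall>t<length w. 0 < w ! t \<and> w ! t \<le> Suc t)"

definition catalan_words :: "nat \<Rightarrow> nat list set" where
  "catalan_words m = {w. catalan_word w \<and> length w = m}"

lemma sorted_le_last:
  assumes "sorted w" "y \<in> set w"
  shows "y \<le> last w"
proof -
  obtain i where i: "i < length w" "w ! i = y" using assms(2) by (auto simp: in_set_conv_nth)
  then have "w ! i \<le> w ! (length w - 1)" using assms(1) by (intro sorted_nth_mono) auto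
  moreover have "w \<noteq> []" using i by auto
  ultimately show ?thesis using i by (simp add: last_conv_nth)
qed

lemma catalan_word_snoc:
  "catalan_word (w @ [v]) \<longleftrightarrow>
     catalan_word w \<and> 0 < v \<and> v \<le> Suc (length w) \<and> (w \<noteq> [] \<longrightarrow> last w \<le> v)"
proof
  assume a: "catalan_word (w @ [v])"
  have "sorted w" "\<forall>x\<in>set w. x \<le> v" using a unfolding catalan_word_def by (auto simp: sorted_append)
  moreover have "\<forall>t<length w. 0 < w ! t \<and> w ! t \<le> Suc t" using a unfolding catalan_word_def
    by (metis (no_types, lifting) butlast_snoc length_append_singleton less_SucI nth_butlast)
  moreover have "0 < v \<and> v \<le> Suc (length w)" using a unfolding catalan_word_def
    by (metis length_append_singleton lessI nth_append_length)
  ultimately show "catalan_word w \<and> 0 < v \<and> v \<le> Suc (length w) \<and> (w \<noteq> [] \<longrightarrow> last w \<le> v)"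
    unfolding catalan_word_def by auto
next
  assume a: "catalan_word w \<and> 0 < v \<and> v \<le> Suc (length w) \<and> (w \<noteq> [] \<longrightarrow> last w \<le> v)"
  then have "\<forall>x\<in>set w. x \<le> v"
    unfolding catalan_word_def using sorted_le_last by (metis empty_iff le_trans list.set(1))
  then show "catalan_word (w @ [v])"
    using a unfolding catalan_word_def by (auto simp: sorted_append nth_append less_Suc_eq)
qed

lemma catalan_words_last:
  assumes "1 \<le> m" "w \<in> catalan_words m"
  shows "w \<noteq> [] \<and> 0 < last w \<and> last w \<le> m"
proof -
  obtain k where m: "m = Suc k" using assms(1) by (cases m) auto
  then have "length w = Suc k" "0 < w ! k \<and> w ! k \<le> Suc k"
    using assms(2) unfolding catalan_words_def catalan_word_def by auto
  moreover have "last w = w ! k" using \<open>length w = Suc k\<close> by (cases w rule: rev_cases) auto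
  ultimately show ?thesis using m by auto
qed

lemma catalan_word_last_pos:
  "catalan_word w \<Longrightarrow> w \<noteq> [] \<Longrightarrow> 0 < last w \<and> last w \<le> length w"
  using catalan_words_last[of "length w" w] unfolding catalan_words_def by (cases w) auto

lemma finite_catalan_words: "finite (catalan_words m)"
proof -
  have "catalan_words m \<subseteq> {w. set w \<subseteq> {..m} \<and> length w = m}"
    unfolding catalan_words_def catalan_word_def
    by (auto simp: in_set_conv_nth) (metis Suc_leI le_trans)
  then show ?thesis by (rule finite_subset) (rule finite_lists_length_eq, simp)
qed

lemma catalan_words_1: "catalan_words 1 = {[1]}"
  unfolding catalan_words_def catalan_word_def by (auto simp: length_Suc_conv)

text \<open>Closed forms for the number of Catalan words of length \<open>m\<close> with \<open>s\<close> ascents whose last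
  letter is \<open>v\<close> (resp. at most \<open>v\<close>); at \<open>v = m\<close> the second one is the Narayana number.\<close>

definition cw_last_formula :: "nat \<Rightarrow> nat \<Rightarrow> nat \<Rightarrow> real" where
  "cw_last_formula m v s =
     (if v = 0 then 0 else if v = 1 then (if s = 0 then 1 else 0) else if s = 0 then 0
      else (real m + 1 - real v) / real m * real (m choose s) * real ((v - 2) choose (s - 1)))"

definition cw_last_le_formula :: "nat \<Rightarrow> nat \<Rightarrow> nat \<Rightarrow> real" where
  "cw_last_le_formula m v s =
     (if v = 0 then 0 else if s = 0 then 1
      else real (m choose s) / real m * (real m * real ((v - 1) choose s) - real s * real (v choose (s + 1))))"

lemma binomial_absorption_real:
  "real (Suc k) * real (n choose Suc k) = real n * real ((n - 1) choose k)"
  using binomial_absorption[of k n] by (metis of_nat_mult)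

lemma binomial_absorb_comp_real:
  "real (Suc k) * real (n choose Suc k) = (real n - real k) * real (n choose k)"
proof (cases "k \<le> n")
  case True
  have "Suc k * (n choose Suc k) = (n - k) * (n choose k)"
    using binomial_absorption[of k n] binomial_absorb_comp[of n k] by simp
  then show ?thesis using True by (metis of_nat_diff of_nat_mult)
next
  case False
  then have "n choose k = 0" "n choose Suc k = 0" by auto
  then show ?thesis by (simp del: binomial_eq_0_iff)
qed

lemma cw_last_le_formula_Suc:
  assumes "1 \<le> m"
  shows "cw_last_le_formula m (Suc v) s = cw_last_le_formula m v s + cw_last_formula m (Suc v) s"
proof (cases "s = 0 \<or> v = 0")
  case True
  then show ?thesis by (auto simp: cw_last_le_formula_def cw_last_formula_def)
next
  case False
  then obtain k u where s: "s = Suc k" and v: "v = Suc u" by (meson not0_implies_Suc)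
  have "real (Suc u choose Suc k) = real (u choose k) + real (u choose Suc k)"
    "real (Suc (Suc u) choose Suc (Suc k)) = real (Suc u choose Suc k) + real (Suc u choose Suc (Suc k))"
    by simp_all
  moreover have "real (Suc k) * real (Suc u choose Suc k) = real (Suc u) * real (u choose k)"
    using binomial_absorption_real[of k "Suc u"] by simp
  ultimately have split: "real m * real (Suc u choose Suc k) - real (Suc k) * real (Suc (Suc u) choose Suc (Suc k))
      = real m * real (u choose Suc k) - real (Suc k) * real (Suc u choose Suc (Suc k))
        + (real m + 1 - real (Suc (Suc u))) * real (u choose k)"
    by (simp add: algebra_simps)
  have "cw_last_le_formula m (Suc v) s = real (m choose s) / real m *
      (real m * real (Suc u choose Suc k) - real (Suc k) * real (Suc (Suc u) choose Suc (Suc k)))"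
    unfolding cw_last_le_formula_def using s v by simp
  also have "\<dots> = real (m choose s) / real m *
        (real m * real (u choose Suc k) - real (Suc k) * real (Suc u choose Suc (Suc k)))
      + real (m choose s) / real m * ((real m + 1 - real (Suc (Suc u))) * real (u choose k))"
    unfolding split by (simp add: distrib_left)
  also have "\<dots> = cw_last_le_formula m v s + cw_last_formula m (Suc v) s"
    unfolding cw_last_le_formula_def cw_last_formula_def using s v by simp
  finally show ?thesis .
qed

lemma cw_last_formula_Suc:
  assumes "1 \<le> m" "0 < v"
  shows "cw_last_formula (Suc m) v s
    = cw_last_formula m v s + (if s = 0 then 0 else cw_last_le_formula m (v - 1) (s - 1))"
proof -
  have m0: "real m \<noteq> 0" using assms by simp
  have "v = 1 \<or> s = 0 \<or> s = 1 \<or> (\<exists>u k. v = Suc (Suc u) \<and> s = Suc (Suc k))"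
    using assms by presburger
  then consider "v = 1" | "s = 0" | "s = 1" | u k where "v = Suc (Suc u)" "s = Suc (Suc k)"
    by blast
  then show ?thesis
  proof cases
    case (4 u k)
    define a where "a = real (u choose Suc k)"
    define c where "c = real (m choose Suc k)"
    have key: "(M + 1 + 1 - (U + 2)) / (M + 1) * ((M + 1) * c / (K + 2)) * a
        = (M + 1 - (U + 2)) / M * ((M - (K + 1)) * c / (K + 2)) * a
          + c / M * (M * a - (K + 1) * ((U + 1) * a / (K + 2)))"
      if "0 < M" "0 \<le> K" for M U K :: real
    proof -
      have "M + 1 \<noteq> 0" "K + 2 \<noteq> 0" "M \<noteq> 0" using that by auto
      then show ?thesis by (simp add: divide_simps) (simp add: algebra_simps)
    qed
    have "real (Suc m choose Suc (Suc k)) = real (Suc m) * c / real (Suc (Suc k))"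
      using binomial_absorption_real[of "Suc k" "Suc m"] unfolding c_def
      by (simp add: field_simps del: of_nat_Suc)
    moreover have "real (m choose Suc (Suc k)) = (real m - real (Suc k)) * c / real (Suc (Suc k))"
      using binomial_absorb_comp_real[of "Suc k" m] unfolding c_def
      by (simp add: field_simps del: of_nat_Suc)
    moreover have "real (Suc u choose Suc (Suc k)) = real (Suc u) * a / real (Suc (Suc k))"
      using binomial_absorption_real[of "Suc k" "Suc u"] unfolding a_def
      by (simp add: field_simps del: of_nat_Suc)
    moreover note key[of "real m" "real k" "real u"]
    ultimately show ?thesis
      unfolding cw_last_formula_def cw_last_le_formula_def using 4 assms
      by (simp add: a_def[symmetric] c_def[symmetric] add.commute add.left_commute)
  qed (use m0 in \<open>auto simp: cw_last_formula_def cw_last_le_formula_def field_simps\<close>)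
qed

lemma cw_last_le_formula_max:
  assumes "1 \<le> m"
  shows "cw_last_le_formula m m s = real (m choose s) * real (m choose Suc s) / real m"
proof -
  have "real m * real ((m - 1) choose s) - real s * real (m choose (s + 1)) = real (m choose Suc s)"
    using binomial_absorption_real[of s m] by (simp add: algebra_simps)
  then show ?thesis using assms unfolding cw_last_le_formula_def by simp
qed

definition card_cw_last :: "nat \<Rightarrow> nat \<Rightarrow> nat \<Rightarrow> nat" where
  "card_cw_last m v s = card {w \<in> catalan_words m. last w = v \<and> asc w = s}"

definition card_cw_last_le :: "nat \<Rightarrow> nat \<Rightarrow> nat \<Rightarrow> nat" where
  "card_cw_last_le m v s = card {w \<in> catalan_words m. last w \<le> v \<and> asc w = s}"

lemma card_cw_last_eq_0:
  assumes "1 \<le> m" "v = 0 \<or> m < v"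
  shows "card_cw_last m v s = 0"
proof -
  have "{w \<in> catalan_words m. last w = v \<and> asc w = s} = {}"
    using catalan_words_last[OF assms(1)] assms(2) by fastforce
  then show ?thesis unfolding card_cw_last_def by (metis card.empty)
qed

lemma card_cw_last_le_0:
  assumes "1 \<le> m"
  shows "card_cw_last_le m 0 s = 0"
proof -
  have "{w \<in> catalan_words m. last w \<le> 0 \<and> asc w = s} = {}"
    using catalan_words_last[OF assms] by fastforce
  then show ?thesis unfolding card_cw_last_le_def by (metis card.empty)
qed

lemma card_cw_last_le_Suc:
  "card_cw_last_le m (Suc v) s = card_cw_last_le m v s + card_cw_last m (Suc v) s"
proof -
  let ?A = "{w \<in> catalan_words m. last w \<le> v \<and> asc w = s}"
  let ?B = "{w \<in> catalan_words m. last w = Suc v \<and> asc w = s}"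
  have "{w \<in> catalan_words m. last w \<le> Suc v \<and> asc w = s} = ?A \<union> ?B" by auto
  moreover have "card (?A \<union> ?B) = card ?A + card ?B"
    by (rule card_Un_disjoint) (use finite_catalan_words in auto)
  ultimately show ?thesis unfolding card_cw_last_le_def card_cw_last_def by simp
qed

lemma card_cw_last_Suc:
  assumes "1 \<le> m" "0 < v" "v \<le> Suc m"
  shows "card_cw_last (Suc m) v s
    = card_cw_last m v s + (if s = 0 then 0 else card_cw_last_le m (v - 1) (s - 1))"
proof -
  let ?A = "{w \<in> catalan_words m. last w = v \<and> asc w = s}"
  let ?B = "{w \<in> catalan_words m. last w < v \<and> Suc (asc w) = s}"
  have snoc_mem: "w @ [v] \<in> catalan_words (Suc m) \<longleftrightarrow> w \<in> catalan_words m"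
    if "w \<noteq> []" "last w \<le> v" for w
    using that assms catalan_word_snoc[of w v] unfolding catalan_words_def by auto
  have eq: "{w \<in> catalan_words (Suc m). last w = v \<and> asc w = s} = (\<lambda>w. w @ [v]) ` (?A \<union> ?B)"
  proof (intro set_eqI iffI)
    fix w assume w: "w \<in> {w \<in> catalan_words (Suc m). last w = v \<and> asc w = s}"
    define w' where "w' = butlast w"
    have "w \<noteq> []" using w unfolding catalan_words_def by auto
    then have w_eq: "w = w' @ [v]" using w unfolding w'_def by auto
    have "w' \<noteq> []" using w assms unfolding catalan_words_def w'_def by (cases w) auto
    moreover have "w' \<in> catalan_words m" "last w' \<le> v"
      using w w_eq \<open>w' \<noteq> []\<close> catalan_word_snoc[of w' v] unfolding catalan_words_def by auto
    ultimately have "w' \<in> ?A \<union> ?B"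
      using w w_eq asc_snoc[of w' v] by (auto split: if_splits)
    then show "w \<in> (\<lambda>w. w @ [v]) ` (?A \<union> ?B)" using w_eq by blast
  next
    fix w assume "w \<in> (\<lambda>w. w @ [v]) ` (?A \<union> ?B)"
    then obtain w' where w': "w' \<in> ?A \<union> ?B" "w = w' @ [v]" by blast
    have "w' \<noteq> []" using w' catalan_words_last[OF assms(1)] by blast
    then show "w \<in> {w \<in> catalan_words (Suc m). last w = v \<and> asc w = s}"
      using w' snoc_mem asc_snoc[of w' v] by auto
  qed
  have "card ?B = (if s = 0 then 0 else card_cw_last_le m (v - 1) (s - 1))"
  proof (cases "s = 0")
    case False
    then have "?B = {w \<in> catalan_words m. last w \<le> v - 1 \<and> asc w = s - 1}" using assms by auto
    then show ?thesis using False unfolding card_cw_last_le_def by simp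
  qed simp
  moreover have "card ((\<lambda>w. w @ [v]) ` (?A \<union> ?B)) = card ?A + card ?B"
    by (subst card_image) (auto simp: inj_on_def finite_catalan_words intro!: card_Un_disjoint)
  ultimately show ?thesis unfolding card_cw_last_def eq by simp
qed

lemma card_cw_last_le_eq_formula:
  assumes "1 \<le> m" "v \<le> Suc m"
    and last: "\<And>u. u \<le> v \<Longrightarrow> real (card_cw_last m u s) = cw_last_formula m u s"
  shows "real (card_cw_last_le m v s) = cw_last_le_formula m v s"
  using assms(2) last
proof (induction v)
  case 0
  then show ?case using assms(1) by (simp add: card_cw_last_le_0 cw_last_le_formula_def)
next
  case (Suc v)
  then show ?case using card_cw_last_le_Suc cw_last_le_formula_Suc[OF assms(1)] by simp
qed

lemma card_cw_last_eq_formula: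
  "1 \<le> m \<Longrightarrow> v \<le> Suc m \<Longrightarrow> real (card_cw_last m v s) = cw_last_formula m v s"
proof (induction m arbitrary: v s rule: nat_induct_at_least)
  case base
  have "{w \<in> catalan_words 1. last w = v \<and> asc w = s} = (if v = 1 \<and> s = 0 then {[1]} else {})"
    unfolding catalan_words_1 by (auto simp: asc_eq_length_ascent_tops)
  moreover have "cw_last_formula 1 v s = (if v = 1 \<and> s = 0 then 1 else 0)"
    using base by (auto simp: cw_last_formula_def le_Suc_eq)
  ultimately show ?case unfolding card_cw_last_def by simp
next
  case (Suc m)
  show ?case
  proof (cases "v = 0 \<or> v = Suc (Suc m)")
    case True
    then show ?thesis using Suc.hyps card_cw_last_eq_0[of "Suc m" v] by (auto simp: cw_last_formula_def)
  next
    case False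
    then have v: "0 < v" "v \<le> Suc m" using Suc.prems by auto
    have "real (card_cw_last (Suc m) v s)
        = real (card_cw_last m v s) + (if s = 0 then 0 else real (card_cw_last_le m (v - 1) (s - 1)))"
      using card_cw_last_Suc[OF Suc.hyps v] by simp
    also have "\<dots> = cw_last_formula m v s + (if s = 0 then 0 else cw_last_le_formula m (v - 1) (s - 1))"
      using Suc.IH[OF v(2)] card_cw_last_le_eq_formula[OF Suc.hyps, of "v - 1" "s - 1"] Suc.IH v
      by simp
    also have "\<dots> = cw_last_formula (Suc m) v s"
      using cw_last_formula_Suc[OF Suc.hyps v(1)] by simp
    finally show ?thesis .
  qed
qed

lemma card_catalan_words_asc:
  assumes "1 \<le> m"
  shows "real (card {w \<in> catalan_words m. asc w = s}) = real (m choose s) * real (m choose Suc s) / real m"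
proof -
  have "{w \<in> catalan_words m. asc w = s} = {w \<in> catalan_words m. last w \<le> m \<and> asc w = s}"
    using catalan_words_last[OF assms] by auto
  then have "card {w \<in> catalan_words m. asc w = s} = card_cw_last_le m m s"
    unfolding card_cw_last_le_def by simp
  also have "real \<dots> = cw_last_le_formula m m s"
    using assms by (intro card_cw_last_le_eq_formula card_cw_last_eq_formula) auto
  finally show ?thesis using cw_last_le_formula_max[OF assms] by simp
qed

lemma choose_mult_le:
  assumes "k \<le> m"
  shows "(n choose m) * (m choose k) = (n choose k) * ((n - k) choose (m - k))"
proof (cases "m \<le> n")
  case True
  then show ?thesis using choose_mult[OF assms] by blast
next
  case False
  then have "n choose m = 0" by simp
  moreover have "n choose k = 0 \<or> (n - k) choose (m - k) = 0"
    using False assms by (cases "k \<le> n") simp_all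
  ultimately show ?thesis by (metis mult_0 mult_0_right)
qed

lemma sum_choose_mult_choose_Suc:
  assumes "j < m"
  shows "(\<Sum>s<m. (m choose s) * (s choose j) * (m choose Suc s)) = (m choose j) * ((2*m - j) choose (m+1))"
proof -
  define r where "r = m - 1 - j"
  have "(\<Sum>s<m. (m choose s) * (s choose j) * (m choose Suc s)) = (\<Sum>s\<in>{j..<m}. (m choose s) * (s choose j) * (m choose Suc s))"
  proof (rule sum.mono_neutral_right)
    show "\<forall>i\<in>{..<m} - {j..<m}. (m choose i) * (i choose j) * (m choose Suc i) = 0" by auto
  qed auto
  also have "\<dots> = (\<Sum>t<m-j. (m choose (t+j)) * ((t+j) choose j) * (m choose Suc (t+j)))"
  proof -
    have "{j..<m} = {0+j..<(m-j)+j}" using assms by simp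
    then show ?thesis using sum.shift_bounds_nat_ivl[of "\<lambda>s. (m choose s) * (s choose j) * (m choose Suc s)" 0 j "m-j"]
      by (simp add: atLeast0LessThan)
  qed
  also have "\<dots> = (\<Sum>t\<le>r. (m choose j) * (((m-j) choose t) * (m choose (r - t))))"
  proof (rule sum.cong)
    show "{..<m-j} = {..r}" unfolding r_def using assms by auto
  next
    fix t assume t: "t \<in> {..r}"
    then have tr: "t + j + 1 \<le> m" unfolding r_def using assms by auto
    have "(m choose (t+j)) * ((t+j) choose j) = (m choose j) * ((m-j) choose t)"
      using choose_mult[of j "t+j" m] tr by simp
    moreover have "m choose Suc (t+j) = m choose (r - t)"
      using binomial_symmetric[of "Suc (t+j)" m] tr unfolding r_def
      by (metis Suc_eq_plus1 diff_diff_left add.commute)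
    ultimately show "(m choose (t+j)) * ((t+j) choose j) * (m choose Suc (t+j)) = (m choose j) * (((m-j) choose t) * (m choose (r - t)))"
      by simp
  qed
  also have "\<dots> = (m choose j) * (((m - j) + m) choose r)"
    by (simp add: sum_distrib_left[symmetric] vandermonde)
  also have "((m - j) + m) choose r = (2*m - j) choose (m+1)"
  proof -
    have e1: "(m - j) + m = 2*m - j" using assms by simp
    have e2: "(2*m - j) - r = m + 1" unfolding r_def using assms by simp
    have "r \<le> 2*m - j" unfolding r_def using assms by simp
    then have "(2*m - j) choose r = (2*m - j) choose ((2*m - j) - r)" by (rule binomial_symmetric)
    then show ?thesis using e1 e2 by simp
  qed
  finally show ?thesis .
qed

lemma sum_narayana_mult_choose:
  assumes "1 \<le> m" "m < n"
  shows "(\<Sum>s<m. (m choose s) * (m choose Suc s) * ((n+s) choose (2*m))) = (n choose (m+1)) * ((n-1) choose (m-1))"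
proof -
  have "(\<Sum>s<m. (m choose s) * (m choose Suc s) * ((n+s) choose (2*m)))
      = (\<Sum>s<m. \<Sum>j\<le>2*m. ((n choose (2*m - j)) * ((m choose s) * (s choose j) * (m choose Suc s))))"
  proof (rule sum.cong[OF refl])
    fix s
    have "(n+s) choose (2*m) = (\<Sum>j\<le>2*m. (s choose j) * (n choose (2*m - j)))"
      using vandermonde[of s n "2*m"] by (simp add: add.commute)
    then show "(m choose s) * (m choose Suc s) * ((n+s) choose (2*m)) = (\<Sum>j\<le>2*m. ((n choose (2*m - j)) * ((m choose s) * (s choose j) * (m choose Suc s))))"
      by (simp add: sum_distrib_left mult_ac)
  qed
  also have "\<dots> = (\<Sum>j\<le>2*m. (n choose (2*m - j)) * (\<Sum>s<m. (m choose s) * (s choose j) * (m choose Suc s)))"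
    by (subst sum.swap) (simp add: sum_distrib_left)
  also have "\<dots> = (\<Sum>j<m. (n choose (2*m - j)) * (\<Sum>s<m. (m choose s) * (s choose j) * (m choose Suc s)))"
  proof (rule sum.mono_neutral_right)
    show "\<forall>i\<in>{..2*m} - {..<m}. (n choose (2*m - i)) * (\<Sum>s<m. (m choose s) * (s choose i) * (m choose Suc s)) = 0"
      by (auto intro!: sum.neutral)
  qed auto
  also have "\<dots> = (\<Sum>j<m. (n choose (m+1)) * ((m choose j) * ((n - (m+1)) choose (m - 1 - j))))"
  proof (rule sum.cong[OF refl])
    fix j assume j: "j \<in> {..<m}"
    then have jm: "j < m" by simp
    have "(n choose (2*m - j)) * ((2*m - j) choose (m+1)) = (n choose (m+1)) * ((n - (m+1)) choose (m - 1 - j))"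
      using choose_mult_le[of "m + 1" "2*m - j" n] jm by (simp add: numeral_2_eq_2)
    then show "(n choose (2*m - j)) * (\<Sum>s<m. (m choose s) * (s choose j) * (m choose Suc s)) = (n choose (m+1)) * ((m choose j) * ((n - (m+1)) choose (m - 1 - j)))"
      using sum_choose_mult_choose_Suc[OF jm] by (simp add: mult_ac)
  qed
  also have "\<dots> = (n choose (m+1)) * (\<Sum>j\<le>m-1. (m choose j) * ((n - (m+1)) choose (m - 1 - j)))"
  proof -
    have "{..<m} = {..m-1}" using assms by auto
    then show ?thesis by (simp add: sum_distrib_left)
  qed
  also have "\<dots> = (n choose (m+1)) * ((n-1) choose (m-1))"
  proof -
    have "m + (n - (m+1)) = n - 1" using assms by simp
    then show ?thesis using vandermonde[of m "n - (m+1)" "m-1"] by simp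
  qed
  finally show ?thesis .
qed

definition max_top :: "nat list \<Rightarrow> nat" where
  "max_top w = (if w = [] then 0 else last w)"

definition tops_invariant :: "nat list \<Rightarrow> bool" where
  "tops_invariant xs \<longleftrightarrow> catalan_word (ascent_tops xs) \<and> (\<forall>y\<in>set xs. y \<le> max_top (ascent_tops xs))
     \<and> (0 < last xs \<longrightarrow> ascent_tops xs \<noteq> [] \<and> last xs = last (ascent_tops xs))"

lemma set_ascent_tops_subset: "set (ascent_tops xs) \<subseteq> set xs"
  unfolding ascent_tops_def by auto

lemma tops_invariant_snoc:
  assumes xs: "xs \<noteq> []" and inv: "tops_invariant xs" and x: "x \<le> asc xs + 1"
    and nonzeros: "0 < x \<Longrightarrow> \<forall>y\<in>set xs. 0 < y \<longrightarrow> y \<le> x"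
  shows "tops_invariant (xs @ [x])"
proof -
  let ?w = "ascent_tops xs"
  have cw: "catalan_word ?w" and bound: "\<forall>y\<in>set xs. y \<le> max_top ?w"
    and last_pos: "0 < last xs \<Longrightarrow> ?w \<noteq> [] \<and> last xs = last ?w"
    using inv unfolding tops_invariant_def by auto
  have top_in: "?w \<noteq> [] \<Longrightarrow> last ?w \<in> set xs"
    using set_ascent_tops_subset last_in_set by blast
  have top_pos: "?w \<noteq> [] \<Longrightarrow> 0 < last ?w"
    using catalan_word_last_pos[OF cw] by blast
  show ?thesis
  proof (cases "last xs < x")
    case True
    have tops: "ascent_tops (xs @ [x]) = ?w @ [x]" using ascent_tops_snoc[OF xs] True by simp
    have "?w \<noteq> [] \<Longrightarrow> last ?w \<le> x" using nonzeros True top_in top_pos by simp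
    then have "catalan_word (?w @ [x])" and "max_top ?w \<le> x"
      using cw True x unfolding catalan_word_snoc max_top_def
      by (simp_all add: asc_eq_length_ascent_tops)
    then show ?thesis using bound True unfolding tops_invariant_def tops
      by (auto simp: max_top_def)
  next
    case False
    have tops: "ascent_tops (xs @ [x]) = ?w" using ascent_tops_snoc[OF xs] False by simp
    have "?w \<noteq> [] \<and> x = last ?w" if "0 < x"
    proof -
      have "?w \<noteq> []" "last xs = last ?w" using False that last_pos by auto
      moreover have "last ?w \<le> x" using nonzeros[OF that] top_in top_pos \<open>?w \<noteq> []\<close> by blast
      ultimately show ?thesis using False by simp
    qed
    then show ?thesis using cw bound unfolding tops_invariant_def tops max_top_def by auto
  qed
qed

lemma tops_invariant_nzsorted: "xs \<in> nzsorted_ascent_seqs n \<Longrightarrow> tops_invariant xs"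
proof (induction xs arbitrary: n rule: rev_induct)
  case Nil
  then show ?case by (simp add: nzsorted_ascent_seqs_def ascent_seq_def)
next
  case (snoc x xs)
  show ?case
  proof (cases "xs = []")
    case True
    then have "[x] \<in> nzsorted_ascent_seqs (Suc 0)"
      using snoc.prems unfolding nzsorted_ascent_seqs_def by simp
    then have "x = 0" using nzsorted_ascent_seqs_1 by simp
    then show ?thesis using True unfolding tops_invariant_def by (simp add: max_top_def catalan_word_def)
  next
    case xs: False
    obtain k where "n = Suc k" using snoc.prems unfolding nzsorted_ascent_seqs_def by (cases n) auto
    then have "xs \<in> nzsorted_ascent_seqs k" "x \<le> asc xs + 1"
      "0 < x \<Longrightarrow> \<forall>y\<in>set xs. 0 < y \<longrightarrow> y \<le> x"
      using snoc.prems nzsorted_ascent_seqs_snoc[OF xs] by auto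
    then show ?thesis using tops_invariant_snoc[OF xs] snoc.IH by blast
  qed
qed

lemma nzsorted_ascent_seqs_le: "xs \<in> nzsorted_ascent_seqs n \<Longrightarrow> y \<in> set xs \<Longrightarrow> y \<le> n"
proof -
  assume xs: "xs \<in> nzsorted_ascent_seqs n" and y: "y \<in> set xs"
  have inv: "tops_invariant xs" using tops_invariant_nzsorted[OF xs] .
  then have "y \<le> max_top (ascent_tops xs)" using y unfolding tops_invariant_def by blast
  also have "\<dots> \<le> length (ascent_tops xs)"
    using inv catalan_word_last_pos unfolding tops_invariant_def max_top_def by auto
  also have "\<dots> \<le> n"
    using asc_le_length[of xs] xs unfolding nzsorted_ascent_seqs_def asc_eq_length_ascent_tops by simp
  finally show ?thesis .
qed

lemma finite_nzsorted_ascent_seqs: "finite (nzsorted_ascent_seqs n)"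
proof -
  have "nzsorted_ascent_seqs n \<subseteq> {xs. set xs \<subseteq> {..n} \<and> length xs = n}"
    using nzsorted_ascent_seqs_le unfolding nzsorted_ascent_seqs_def by fastforce
  then show ?thesis by (rule finite_subset) (rule finite_lists_length_eq, simp)
qed

lemma nonzeros_le_iff_max_top_le:
  assumes "xs \<in> nzsorted_ascent_seqs n" "0 < x"
  shows "(\<forall>y\<in>set xs. 0 < y \<longrightarrow> y \<le> x) \<longleftrightarrow> max_top (ascent_tops xs) \<le> x"
proof
  assume "\<forall>y\<in>set xs. 0 < y \<longrightarrow> y \<le> x"
  moreover have "ascent_tops xs \<noteq> [] \<Longrightarrow> last (ascent_tops xs) \<in> set xs"
    using set_ascent_tops_subset last_in_set by blast
  moreover have "ascent_tops xs \<noteq> [] \<Longrightarrow> 0 < last (ascent_tops xs)"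
    using tops_invariant_nzsorted[OF assms(1)] catalan_word_last_pos
    unfolding tops_invariant_def by auto
  ultimately show "max_top (ascent_tops xs) \<le> x" unfolding max_top_def by auto
next
  assume "max_top (ascent_tops xs) \<le> x"
  then show "\<forall>y\<in>set xs. 0 < y \<longrightarrow> y \<le> x"
    using tops_invariant_nzsorted[OF assms(1)] unfolding tops_invariant_def by (meson le_trans)
qed

definition ends_zero :: "nat \<Rightarrow> nat list \<Rightarrow> nat list set" where
  "ends_zero n w = {xs \<in> nzsorted_ascent_seqs n. ascent_tops xs = w \<and> last xs = 0}"

definition ends_pos :: "nat \<Rightarrow> nat list \<Rightarrow> nat list set" where
  "ends_pos n w = {xs \<in> nzsorted_ascent_seqs n. ascent_tops xs = w \<and> 0 < last xs}"

lemma finite_ends_zero: "finite (ends_zero n w)"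
  unfolding ends_zero_def using finite_nzsorted_ascent_seqs by simp

lemma finite_ends_pos: "finite (ends_pos n w)"
  unfolding ends_pos_def using finite_nzsorted_ascent_seqs by simp

lemma ends_pos_Nil: "ends_pos n [] = {}"
  unfolding ends_pos_def using tops_invariant_nzsorted unfolding tops_invariant_def by fastforce

lemma last_ends_pos:
  assumes "xs \<in> ends_pos n w"
  shows "w \<noteq> [] \<and> last xs = last w"
  using assms tops_invariant_nzsorted unfolding ends_pos_def tops_invariant_def by auto

lemma nzsorted_ascent_seqs_butlast:
  assumes "xs \<in> nzsorted_ascent_seqs (Suc n)" "1 \<le> n"
  shows "butlast xs \<noteq> [] \<and> xs = butlast xs @ [last xs]"
proof -
  have "length xs = Suc n" using assms(1) unfolding nzsorted_ascent_seqs_def by simp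
  then show ?thesis using assms(2) by (cases xs rule: rev_cases) auto
qed

lemma ends_zero_Suc:
  assumes "1 \<le> n"
  shows "ends_zero (Suc n) w = (\<lambda>ys. ys @ [0]) ` (ends_zero n w \<union> ends_pos n w)"
proof (intro set_eqI iffI)
  fix xs assume "xs \<in> ends_zero (Suc n) w"
  then have xs: "xs \<in> nzsorted_ascent_seqs (Suc n)" "ascent_tops xs = w" "last xs = 0"
    unfolding ends_zero_def by auto
  let ?ys = "butlast xs"
  have ne: "?ys \<noteq> []" and xs_eq: "xs = ?ys @ [0]"
    using nzsorted_ascent_seqs_butlast[OF xs(1) assms] xs(3) by auto
  have "?ys \<in> nzsorted_ascent_seqs n" "ascent_tops ?ys = w"
    using xs nzsorted_ascent_seqs_snoc[OF ne, of 0 n] ascent_tops_snoc[OF ne, of 0] xs_eq by auto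
  then have "?ys \<in> ends_zero n w \<union> ends_pos n w" unfolding ends_zero_def ends_pos_def by auto
  then show "xs \<in> (\<lambda>ys. ys @ [0]) ` (ends_zero n w \<union> ends_pos n w)"
    using xs_eq by (rule rev_image_eqI)
next
  fix xs assume "xs \<in> (\<lambda>ys. ys @ [0]) ` (ends_zero n w \<union> ends_pos n w)"
  then obtain ys where ys: "ys \<in> nzsorted_ascent_seqs n" "ascent_tops ys = w" "xs = ys @ [0]"
    unfolding ends_zero_def ends_pos_def by blast
  moreover have ne: "ys \<noteq> []" using ys(1) nzsorted_ascent_seqs_nonempty by blast
  ultimately show "xs \<in> ends_zero (Suc n) w"
    unfolding ends_zero_def using nzsorted_ascent_seqs_snoc[OF ne] ascent_tops_snoc[OF ne] by simp
qed

lemma snoc_last_mem_ends_pos: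
  assumes "catalan_word w" "ys \<in> ends_pos n w"
  shows "ys @ [last ys] \<in> ends_pos (Suc n) w"
proof -
  have ys: "ys \<in> nzsorted_ascent_seqs n" "ascent_tops ys = w" "0 < last ys"
    using assms(2) unfolding ends_pos_def by auto
  have ne: "ys \<noteq> []" using ys(1) nzsorted_ascent_seqs_nonempty by blast
  have w: "w \<noteq> []" "last ys = last w" using last_ends_pos[OF assms(2)] by auto
  have "last ys \<le> asc ys + 1"
    using catalan_word_last_pos[OF assms(1) w(1)] w ys(2) by (simp add: asc_eq_length_ascent_tops)
  moreover have "\<forall>y\<in>set ys. 0 < y \<longrightarrow> y \<le> last ys"
    using nonzeros_le_iff_max_top_le[OF ys(1) ys(3)] ys(2) w by (simp add: max_top_def)
  ultimately show ?thesis
    using ys nzsorted_ascent_seqs_snoc[OF ne] ascent_tops_snoc[OF ne] unfolding ends_pos_def by simp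
qed

lemma snoc_top_mem_ends_pos:
  assumes "catalan_word w" "w \<noteq> []"
    and "ys \<in> ends_zero n (butlast w) \<or> ys \<in> ends_pos n (butlast w) \<and> last (butlast w) < last w"
  shows "ys @ [last w] \<in> ends_pos (Suc n) w"
proof -
  let ?bw = "butlast w" and ?v = "last w"
  have w_eq: "w = ?bw @ [?v]" using assms(2) by simp
  then have cw: "0 < ?v" "?v \<le> Suc (length ?bw)" "?bw \<noteq> [] \<longrightarrow> last ?bw \<le> ?v"
    using assms(1) catalan_word_snoc[of ?bw ?v] by metis+
  have ys: "ys \<in> nzsorted_ascent_seqs n" "ascent_tops ys = ?bw"
    using assms(3) unfolding ends_zero_def ends_pos_def by auto
  have ne: "ys \<noteq> []" using ys(1) nzsorted_ascent_seqs_nonempty by blast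
  have "?v \<le> asc ys + 1" using cw(2) ys(2) by (simp add: asc_eq_length_ascent_tops)
  moreover have "\<forall>y\<in>set ys. 0 < y \<longrightarrow> y \<le> ?v"
    using nonzeros_le_iff_max_top_le[OF ys(1) cw(1)] cw(3) ys(2) by (simp add: max_top_def)
  moreover have "last ys < ?v"
  proof (cases "last ys = 0")
    case False
    then have "ys \<in> ends_pos n ?bw" "last ?bw < ?v"
      using assms(3) unfolding ends_zero_def by auto
    then show ?thesis using last_ends_pos by simp
  qed (use cw in simp)
  ultimately show ?thesis
    using ys nzsorted_ascent_seqs_snoc[OF ne] ascent_tops_snoc[OF ne] w_eq cw(1)
    unfolding ends_pos_def by simp
qed

text \<open>A nonzero last letter that creates no ascent is at most the previous letter and at least
  every earlier nonzero letter, so it repeats the previous letter.\<close>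

lemma ends_pos_Suc_cases:
  assumes "1 \<le> n" "xs \<in> ends_pos (Suc n) w"
  shows "(\<exists>ys\<in>ends_pos n w. xs = ys @ [last ys]) \<or>
    (\<exists>ys. (ys \<in> ends_zero n (butlast w) \<or> ys \<in> ends_pos n (butlast w) \<and> last (butlast w) < last w)
       \<and> xs = ys @ [last w])"
proof -
  let ?ys = "butlast xs" and ?x = "last xs"
  have xs: "xs \<in> nzsorted_ascent_seqs (Suc n)" "ascent_tops xs = w" "0 < ?x"
    using assms(2) unfolding ends_pos_def by auto
  have ne: "?ys \<noteq> []" and xs_eq: "xs = ?ys @ [?x]"
    using nzsorted_ascent_seqs_butlast[OF xs(1) assms(1)] by auto
  have ys: "?ys \<in> nzsorted_ascent_seqs n" "\<forall>y\<in>set ?ys. 0 < y \<longrightarrow> y \<le> ?x"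
    using xs nzsorted_ascent_seqs_snoc[OF ne, of ?x n] xs_eq by auto
  have tops: "w = ascent_tops ?ys @ (if last ?ys < ?x then [?x] else [])"
    using xs(2) ascent_tops_snoc[OF ne, of ?x] xs_eq by simp
  show ?thesis
  proof (cases "last ?ys < ?x")
    case True
    then have bw: "butlast w = ascent_tops ?ys" "last w = ?x" using tops by simp_all
    have "?ys \<in> ends_zero n (butlast w) \<or> ?ys \<in> ends_pos n (butlast w) \<and> last (butlast w) < last w"
    proof (cases "last ?ys = 0")
      case False
      then have "?ys \<in> ends_pos n (butlast w)" using ys(1) bw unfolding ends_pos_def by simp
      then show ?thesis using last_ends_pos True bw by auto
    qed (use ys(1) bw in \<open>simp add: ends_zero_def\<close>)
    then show ?thesis using xs_eq bw by metis
  next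
    case False
    then have w: "w = ascent_tops ?ys" and pos: "0 < last ?ys" using tops xs(3) by auto
    then have ys_pos: "?ys \<in> ends_pos n w" using ys(1) unfolding ends_pos_def by simp
    then have "last ?ys = last w" "w \<noteq> []" using last_ends_pos by auto
    moreover have "max_top w \<le> ?x" using nonzeros_le_iff_max_top_le[OF ys(1) xs(3)] ys(2) w by simp
    ultimately have "?x = last ?ys" using False by (simp add: max_top_def)
    then show ?thesis using ys_pos xs_eq by metis
  qed
qed

lemma ends_pos_Suc:
  assumes "1 \<le> n" "catalan_word w" "w \<noteq> []"
  shows "ends_pos (Suc n) w = (\<lambda>ys. ys @ [last ys]) ` ends_pos n w \<union>
    (\<lambda>ys. ys @ [last w]) ` (ends_zero n (butlast w) \<union>
      {ys \<in> ends_pos n (butlast w). last (butlast w) < last w})"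
  using ends_pos_Suc_cases[OF assms(1)] snoc_last_mem_ends_pos[OF assms(2)]
    snoc_top_mem_ends_pos[OF assms(2,3)]
  by blast

lemma card_ends_zero_Suc:
  assumes "1 \<le> n"
  shows "card (ends_zero (Suc n) w) = card (ends_zero n w) + card (ends_pos n w)"
proof -
  have "card (ends_zero (Suc n) w) = card (ends_zero n w \<union> ends_pos n w)"
    unfolding ends_zero_Suc[OF assms] by (rule card_image) (auto simp: inj_on_def)
  also have "\<dots> = card (ends_zero n w) + card (ends_pos n w)"
    by (rule card_Un_disjoint[OF finite_ends_zero finite_ends_pos]) (auto simp: ends_zero_def ends_pos_def)
  finally show ?thesis .
qed

lemma card_ends_pos_Suc:
  assumes "1 \<le> n" "catalan_word w" "w \<noteq> []"
  shows "card (ends_pos (Suc n) w) = card (ends_pos n w) + card (ends_zero n (butlast w))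
     + (if last (butlast w) < last w then card (ends_pos n (butlast w)) else 0)"
proof -
  let ?A = "(\<lambda>ys. ys @ [last ys]) ` ends_pos n w"
  let ?C = "ends_zero n (butlast w) \<union> {ys \<in> ends_pos n (butlast w). last (butlast w) < last w}"
  let ?B = "(\<lambda>ys. ys @ [last w]) ` ?C"
  have "?A \<inter> ?B = {}"
  proof (rule ccontr)
    assume "?A \<inter> ?B \<noteq> {}"
    then obtain ys where ys: "ys \<in> ends_pos n w" "ys \<in> ?C" "last ys = last w" by force
    then have "ys \<in> ends_pos n (butlast w)" "last (butlast w) < last w"
      unfolding ends_zero_def ends_pos_def by auto
    then show False using ys(3) last_ends_pos by fastforce
  qed
  moreover have "card ?A = card (ends_pos n w)" by (rule card_image) (auto simp: inj_on_def)
  moreover have "card ?B = card ?C" by (rule card_image) (auto simp: inj_on_def)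
  moreover have "card ?C = card (ends_zero n (butlast w))
      + (if last (butlast w) < last w then card (ends_pos n (butlast w)) else 0)"
    by (subst card_Un_disjoint)
      (auto simp: finite_ends_zero finite_ends_pos finite_nzsorted_ascent_seqs ends_zero_def ends_pos_def)
  ultimately show ?thesis
    unfolding ends_pos_Suc[OF assms] by (simp add: card_Un_disjoint finite_ends_pos finite_ends_zero)
qed

lemma ends_zero_1: "ends_zero (Suc 0) w = (if w = [] then {[0]} else {})"
  unfolding ends_zero_def nzsorted_ascent_seqs_1 by auto

lemma ends_pos_1: "ends_pos (Suc 0) w = {}"
  unfolding ends_pos_def nzsorted_ascent_seqs_1 by auto

lemma choose_add_choose_pred: "0 < k \<Longrightarrow> (n choose k) + (n choose (k - 1)) = Suc n choose k"
  by (cases k) simp_all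

lemma card_ends_zero_ends_pos:
  "catalan_word w \<Longrightarrow> card (ends_zero (Suc k) w) = (k + asc w) choose (2 * length w) \<and>
     card (ends_pos (Suc k) w) = (if w = [] then 0 else (k + asc w) choose (2 * length w - 1))"
proof (induction k arbitrary: w)
  case 0
  have "w \<noteq> [] \<Longrightarrow> asc w < 2 * length w - 1" using asc_le_length[of w] by (cases w) auto
  then show ?case by (auto simp: ends_zero_1 ends_pos_1 asc_eq_length_ascent_tops)
next
  case (Suc k)
  have IH: "card (ends_zero (Suc k) u) = (k + asc u) choose (2 * length u)"
    "card (ends_pos (Suc k) u) = (if u = [] then 0 else (k + asc u) choose (2 * length u - 1))"
    if "catalan_word u" for u
    using Suc.IH[OF that] by auto
  have zero: "card (ends_zero (Suc (Suc k)) w) = (Suc k + asc w) choose (2 * length w)"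
    using card_ends_zero_Suc[of "Suc k" w] IH[OF Suc.prems] choose_add_choose_pred[of "2 * length w"]
    by (cases "w = []") (simp_all add: asc_eq_length_ascent_tops)
  have "card (ends_pos (Suc (Suc k)) w) = (Suc k + asc w) choose (2 * length w - 1)" if w: "w \<noteq> []"
  proof -
    let ?bw = "butlast w" and ?v = "last w"
    have w_eq: "w = ?bw @ [?v]" using w by simp
    have cw: "catalan_word ?bw" using Suc.prems catalan_word_snoc[of ?bw ?v] w_eq by metis
    have step: "card (ends_pos (Suc (Suc k)) w) = card (ends_pos (Suc k) w) + card (ends_zero (Suc k) ?bw)
        + (if last ?bw < ?v then card (ends_pos (Suc k) ?bw) else 0)"
      using card_ends_pos_Suc[of "Suc k" w] Suc.prems w by simp
    show ?thesis
    proof (cases "?bw = []")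
      case True
      then have w1: "w = [?v]" using w_eq by simp
      have "asc w = 0" "length w = 1" by (subst w1; simp add: asc_eq_length_ascent_tops)+
      then show ?thesis using step IH[OF Suc.prems] IH[OF cw] True w by simp
    next
      case bw: False
      have len: "2 * length w - 1 = Suc (2 * length ?bw)" using w by (cases "length w") auto
      have asc: "asc w = asc ?bw + (if last ?bw < ?v then 1 else 0)"
        using asc_snoc[OF bw, of ?v] w_eq by simp
      have pascal: "((k + asc ?bw) choose (2 * length ?bw)) + ((k + asc ?bw) choose (2 * length ?bw - 1))
          = Suc (k + asc ?bw) choose (2 * length ?bw)"
        using bw by (intro choose_add_choose_pred) (simp add: length_greater_0_conv[symmetric] del: length_greater_0_conv)
      show ?thesis
        using step IH[OF Suc.prems] IH[OF cw] w bw len asc pascal by (auto simp: add.commute)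
    qed
  qed
  then show ?case using zero by (simp add: ends_pos_Nil)
qed

lemma card_nzsorted_ascent_seqs_tops:
  assumes "catalan_word w"
  shows "card {xs \<in> nzsorted_ascent_seqs (Suc k). ascent_tops xs = w} = (Suc k + asc w) choose (2 * length w)"
proof -
  have "{xs \<in> nzsorted_ascent_seqs (Suc k). ascent_tops xs = w} = ends_zero (Suc k) w \<union> ends_pos (Suc k) w"
    unfolding ends_zero_def ends_pos_def by auto
  moreover have "card (ends_zero (Suc k) w \<union> ends_pos (Suc k) w)
      = card (ends_zero (Suc k) w) + card (ends_pos (Suc k) w)"
    by (rule card_Un_disjoint[OF finite_ends_zero finite_ends_pos]) (auto simp: ends_zero_def ends_pos_def)
  ultimately have "card {xs \<in> nzsorted_ascent_seqs (Suc k). ascent_tops xs = w}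
      = card (ends_zero (Suc k) w) + card (ends_pos (Suc k) w)"
    by simp
  also have "\<dots> = (Suc k + asc w) choose (2 * length w)"
    using card_ends_zero_ends_pos[OF assms, of k] choose_add_choose_pred[of "2 * length w" "k + asc w"]
    by (cases "w = []") (simp_all add: asc_eq_length_ascent_tops)
  finally show ?thesis .
qed

lemma card_nzsorted_ascent_seqs_asc:
  assumes "0 < n"
  shows "card {xs \<in> nzsorted_ascent_seqs n. asc xs = m} = (\<Sum>w\<in>catalan_words m. (n + asc w) choose (2 * m))"
proof -
  obtain k where n: "n = Suc k" using assms by (cases n) auto
  have "card {xs \<in> nzsorted_ascent_seqs n. asc xs = m}
      = card (\<Union>w\<in>catalan_words m. {xs \<in> nzsorted_ascent_seqs n. ascent_tops xs = w})"
    using tops_invariant_nzsorted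
    unfolding tops_invariant_def catalan_words_def asc_eq_length_ascent_tops
    by (intro arg_cong[where f = card]) auto
  also have "\<dots> = (\<Sum>w\<in>catalan_words m. card {xs \<in> nzsorted_ascent_seqs n. ascent_tops xs = w})"
    by (rule card_UN_disjoint[OF finite_catalan_words]) (auto simp: finite_nzsorted_ascent_seqs)
  also have "\<dots> = (\<Sum>w\<in>catalan_words m. (n + asc w) choose (2 * m))"
    using card_nzsorted_ascent_seqs_tops n unfolding catalan_words_def by (intro sum.cong) auto
  finally show ?thesis .
qed

lemma card_nzsorted_ascent_seqs_asc_narayana:
  assumes "m < n"
  shows "real (card {xs \<in> nzsorted_ascent_seqs n. asc xs = m}) = narayana n (m + 1)"
proof (cases "m = 0")
  case True
  have "catalan_words 0 = {[]}" unfolding catalan_words_def catalan_word_def by auto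
  then show ?thesis
    using card_nzsorted_ascent_seqs_asc[of n 0] True assms by (simp add: narayana_def asc_def)
next
  case False
  then have m: "1 \<le> m" by simp
  have "asc w < m" if "w \<in> catalan_words m" for w
  proof -
    have "asc w \<le> m - 1" using asc_le_length[of w] that unfolding catalan_words_def by simp
    then show ?thesis using m by linarith
  qed
  then have "asc ` catalan_words m \<subseteq> {..<m}" by auto
  then have "card {xs \<in> nzsorted_ascent_seqs n. asc xs = m}
      = (\<Sum>s<m. \<Sum>w\<in>{w \<in> catalan_words m. asc w = s}. (n + asc w) choose (2 * m))"
    unfolding card_nzsorted_ascent_seqs_asc[OF order.strict_trans1[OF le0 assms]]
    by (intro sum.group[symmetric] finite_catalan_words) auto
  also have "\<dots> = (\<Sum>s<m. card {w \<in> catalan_words m. asc w = s} * ((n + s) choose (2 * m)))"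
    by simp
  finally have "real (card {xs \<in> nzsorted_ascent_seqs n. asc xs = m})
      = (\<Sum>s<m. real (m choose s) * real (m choose Suc s) / real m * real ((n + s) choose (2 * m)))"
    using card_catalan_words_asc[OF m] by simp
  also have "\<dots> = real (\<Sum>s<m. (m choose s) * (m choose Suc s) * ((n + s) choose (2 * m))) / real m"
    by (simp add: sum_divide_distrib)
  also have "\<dots> = real (n choose (m + 1)) * real ((n - 1) choose (m - 1)) / real m"
    using sum_narayana_mult_choose[OF m assms] by simp
  also have "\<dots> = narayana n (m + 1)"
    using binomial_absorption_real[of "m - 1" n] m assms unfolding narayana_def
    by (simp add: field_simps)
  finally show ?thesis .
qed

theorem proposition1:
  fixes n :: nat
  assumes "n \<ge> 1"
  shows "Sn n {[0,0,2,1], [0,1,2,1]} = Sn n {[0,1,2,1], [0,1,3,2]}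
     \<and> Sn n {[0,1,2,1], [0,1,3,2]} = Sn n {[0,2,1]}
     \<and> (\<forall>m<n. Snm n m {[0,0,2,1], [0,1,2,1]} = Snm n m {[0,1,2,1], [0,1,3,2]}
             \<and> real (Snm n m {[0,1,2,1], [0,1,3,2]}) = narayana n (m + 1))"
proof (intro conjI allI impI)
  show "Sn n {[0,0,2,1], [0,1,2,1]} = Sn n {[0,1,2,1], [0,1,3,2]}"
    using Sn_0021_0121_eq_Sn_021 Sn_0121_0132_eq_Sn_021 by simp
  show "Sn n {[0,1,2,1], [0,1,3,2]} = Sn n {[0,2,1]}"
    by (rule Sn_0121_0132_eq_Sn_021)
  fix m assume m: "m < n"
  show "Snm n m {[0,0,2,1], [0,1,2,1]} = Snm n m {[0,1,2,1], [0,1,3,2]}"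
    unfolding Snm_def Snm_set_def Sn_0021_0121_eq_Sn_021 Sn_0121_0132_eq_Sn_021 ..
  show "real (Snm n m {[0,1,2,1], [0,1,3,2]}) = narayana n (m + 1)"
    unfolding Snm_def Snm_set_def Sn_0121_0132_eq_Sn_021 Sn_021_eq
    using card_nzsorted_ascent_seqs_asc_narayana[OF m] by simp
qed

end
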